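(* Consider the sub-$\ell^\infty$ structure on $\mathbb{R}^2$ defined by $X_1=\partial_x$, $X_2=x\partial_y$. The nonconstant extremal trajectories that have a singular arc (i.e. a $\varphi_j$-singular arc for some $j\in\{1,2\}$ for some extremal lift) are exactly the nonconstant admissible trajectories for which $u_1$ is a.e. constantly equal to $1$ or a.e. constantly equal to $-1$. Each of them consists of a single singular arc (the singularity holds on the whole domain of definition), and each of them is a time-minimizer.
   Context: Sub-$\ell^\infty$ structure defined by smooth vector fields $X_1,\dots,X_k$ on a manifold $M$: an admissible trajectory is an absolutely continuous curve $\gamma:[0,T]\to M$ together with a measurable control $u=(u_1,\dots,u_k):[0,T]\to\mathbb{R}^k$ with $|u_i(t)|\le1$ for all $i$ and a.e. $t$, such that $\dot\gamma(t)=\sum_i u_i(t)X_i(\gamma(t))$ for a.e. $t$. It is a time-minimizer (optimal) if no admissible trajectory joins $\gamma(0)$ to $\gamma(T)$ in time less than $T$. An extremal pair is a pair $(\lambda,\gamma)$ where $\gamma$ is admissible with control $u$ and $\lambda:[0,T]\to T^*M$ is absolutely continuous with $\lambda(t)\in T^*_{\gamma(t)}M\setminus\{0\}$, such that, with $\mathcal H(\lambda,p,u)=\sum_i u_i\langle\lambda,X_i(p)\rangle$, in canonical coordinates $\dot\lambda=-\partial_p\mathcal H(\lambda,\gamma,u)$, $\dot\gamma=\partial_\lambda\mathcal H(\lambda,\gamma,u)$ a.e., and there is a constant $\lambda_0\ge0$ with $\sum_iu_i(t)\langle\lambda(t),X_i(\gamma(t))\rangle=\sum_i|\langle\lambda(t),X_i(\gamma(t))\rangle|=\lambda_0$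 for a.e. $t$; $\gamma$ is then an extremal trajectory and $\lambda$ an extremal lift. The switching functions are $\varphi_j(t)=\langle\lambda(t),X_j(\gamma(t))\rangle$. The restriction of an extremal pair to an open interval $I$ is a $\varphi_j$-singular arc if $\varphi_j\equiv0$ on $I$. *)

theory Defs
  imports "HOL-Analysis.Analysis"
begin

definition abs_cont_on :: "real set \<Rightarrow> (real \<Rightarrow> 'a::real_normed_vector) \<Rightarrow> bool" where
  "abs_cont_on S f \<longleftrightarrow>
     (\<forall>e>0. \<exists>d>0. \<forall>(n::nat) (a::nat \<Rightarrow> real) b.
        (\<forall>i<n. a i \<in> S \<and> b i \<in> S \<and> a i \<le> b i) \<and>
        (\<forall>i<n. \<forall>j<n. i \<noteq> j \<longrightarrow> b i \<le> a j \<or> b j \<le> a i) \<and>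
        (\<Sum>i<n. b i - a i) < d
        \<longrightarrow> (\<Sum>i<n. norm (f (b i) - f (a i))) < e)"

definition X :: "nat \<Rightarrow> real \<times> real \<Rightarrow> real \<times> real" where
  "X j p = (if j = 1 then (1, 0) else (0, fst p))"

text \<open>Controls are pairs u = (u1,u2); covectors are pairs paired with vectors by the
  standard coordinate pairing (inner product on real x real).\<close>
definition Ham :: "real \<times> real \<Rightarrow> real \<times> real \<Rightarrow> real \<times> real \<Rightarrow> real" where
  "Ham l p w = fst w * (l \<bullet> X 1 p) + snd w * (l \<bullet> X 2 p)"

definition admissible :: "real \<Rightarrow> (real \<Rightarrow> real \<times> real) \<Rightarrow> (real \<Rightarrow> real \<times> real) \<Rightarrow> bool" where
  "admissible T \<gamma> u \<longleftrightarrow>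
     0 \<le> T \<and> abs_cont_on {0..T} \<gamma> \<and>
     u \<in> borel_measurable (restrict_space lebesgue {0..T}) \<and>
     (AE t in lebesgue. t \<in> {0..T} \<longrightarrow> \<bar>fst (u t)\<bar> \<le> 1 \<and> \<bar>snd (u t)\<bar> \<le> 1) \<and>
     (AE t in lebesgue. t \<in> {0..T} \<longrightarrow>
        (\<gamma> has_vector_derivative (fst (u t) *\<^sub>R X 1 (\<gamma> t) + snd (u t) *\<^sub>R X 2 (\<gamma> t)))
          (at t within {0..T}))"

definition time_minimizer :: "real \<Rightarrow> (real \<Rightarrow> real \<times> real) \<Rightarrow> bool" where
  "time_minimizer T \<gamma> \<longleftrightarrow>
     (\<forall>T' \<gamma>' u'. admissible T' \<gamma>' u' \<and> \<gamma>' 0 = \<gamma> 0 \<and> \<gamma>' T' = \<gamma> T \<longrightarrow> T \<le> T')"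

text \<open>Extremal pair: Hamiltonian system in canonical coordinates (partial derivatives of
  the Hamiltonian expressed via Frechet derivatives) plus the maximality condition.\<close>
definition extremal_pair ::
  "real \<Rightarrow> (real \<Rightarrow> real \<times> real) \<Rightarrow> (real \<Rightarrow> real \<times> real) \<Rightarrow> (real \<Rightarrow> real \<times> real) \<Rightarrow> bool" where
  "extremal_pair T lam \<gamma> u \<longleftrightarrow>
     admissible T \<gamma> u \<and> abs_cont_on {0..T} lam \<and> (\<forall>t\<in>{0..T}. lam t \<noteq> 0) \<and>
     (AE t in lebesgue. t \<in> {0..T} \<longrightarrow>
        (\<exists>w. (lam has_vector_derivative w) (at t within {0..T}) \<and>
             ((\<lambda>p. Ham (lam t) p (u t)) has_derivative (\<lambda>h. - (w \<bullet> h))) (at (\<gamma> t)))) \<and>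
     (AE t in lebesgue. t \<in> {0..T} \<longrightarrow>
        (\<exists>v. (\<gamma> has_vector_derivative v) (at t within {0..T}) \<and>
             ((\<lambda>l. Ham l (\<gamma> t) (u t)) has_derivative (\<lambda>h. v \<bullet> h)) (at (lam t)))) \<and>
     (\<exists>lam0\<ge>0. AE t in lebesgue. t \<in> {0..T} \<longrightarrow>
        Ham (lam t) (\<gamma> t) (u t) = \<bar>lam t \<bullet> X 1 (\<gamma> t)\<bar> + \<bar>lam t \<bullet> X 2 (\<gamma> t)\<bar> \<and>
        \<bar>lam t \<bullet> X 1 (\<gamma> t)\<bar> + \<bar>lam t \<bullet> X 2 (\<gamma> t)\<bar> = lam0)"

definition switching :: "(real \<Rightarrow> real \<times> real) \<Rightarrow> (real \<Rightarrow> real \<times> real) \<Rightarrow> nat \<Rightarrow> real \<Rightarrow> real" where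
  "switching lam \<gamma> j t = lam t \<bullet> X j (\<gamma> t)"

definition singular_arc ::
  "real \<Rightarrow> (real \<Rightarrow> real \<times> real) \<Rightarrow> (real \<Rightarrow> real \<times> real) \<Rightarrow> nat \<Rightarrow> real \<Rightarrow> real \<Rightarrow> bool" where
  "singular_arc T lam \<gamma> j a b \<longleftrightarrow>
     0 \<le> a \<and> a < b \<and> b \<le> T \<and> (\<forall>t\<in>{a<..<b}. switching lam \<gamma> j t = 0)"

definition nonconstant :: "real \<Rightarrow> (real \<Rightarrow> real \<times> real) \<Rightarrow> bool" where
  "nonconstant T \<gamma> \<longleftrightarrow> (\<exists>s\<in>{0..T}. \<exists>t\<in>{0..T}. \<gamma> s \<noteq> \<gamma> t)"

definition extremal_with_singular_arc :: "real \<Rightarrow> (real \<Rightarrow> real \<times> real) \<Rightarrow> bool" where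
  "extremal_with_singular_arc T \<gamma> \<longleftrightarrow>
     (\<exists>u lam j a b. j \<in> {1, 2} \<and> extremal_pair T lam \<gamma> u \<and> singular_arc T lam \<gamma> j a b)"

end

theory Submission
  imports Defs
begin

text \<open>In coordinates the Hamiltonian is u1 \<lambda>1 + u2 \<lambda>2 x, so along an extremal \<lambda>2 is constant,
  \<lambda>1' = -u2 \<lambda>2, and the maximized Hamiltonian is a constant H0. If H0 = 0 the costate is (0, c)
  with c \<noteq> 0, which pins the trajectory to the y-axis, where it cannot move; so H0 > 0 for a
  nonconstant trajectory, and H0 cannot vanish a.e. on any subinterval. On a \<phi>1-singular arc
  \<lambda>1 = 0 forces u2 \<lambda>2 = 0, so H0 = 0 there: impossible. On a \<phi>2-singular arc \<lambda>2 must vanish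
  (otherwise x = 0 on the arc, so u1 = x' = 0 and again H0 = 0); then \<lambda>1 is a nonzero constant
  and maximality gives u1 = sgn \<lambda>1 a.e. Conversely, u1 = s = \<plusminus>1 is the control of the
  extremal with costate (s, 0), which is \<phi>2-singular on the whole interval. Such trajectories
  are time-minimal because every admissible trajectory moves x with speed at most 1.

  The analytic input is the mean value inequality for absolutely continuous functions with an
  a.e. bound on the derivative, which follows from Cousin's lemma.\<close>

section \<open>Absolutely continuous functions\<close>

definition nonoverlapping_intervals :: "real set \<Rightarrow> nat \<Rightarrow> (nat \<Rightarrow> real) \<Rightarrow> (nat \<Rightarrow> real) \<Rightarrow> bool" where
  "nonoverlapping_intervals S n a b \<longleftrightarrow>
     (\<forall>i<n. a i \<in> S \<and> b i \<in> S \<and> a i \<le> b i) \<and> (\<forall>i<n. \<forall>j<n. i \<noteq> j \<longrightarrow> b i \<le> a j \<or> b j \<le> a i)"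

lemma abs_cont_on_iff:
  "abs_cont_on S f \<longleftrightarrow> (\<forall>e>0. \<exists>\<delta>>0. \<forall>n a b. nonoverlapping_intervals S n a b \<and> (\<Sum>i<n. b i - a i) < \<delta>
      \<longrightarrow> (\<Sum>i<n. norm (f (b i) - f (a i))) < e)"
  by (simp only: abs_cont_on_def nonoverlapping_intervals_def conj_assoc)

lemma abs_cont_onE:
  assumes "abs_cont_on S f" "e > 0"
  obtains \<delta> where "\<delta> > 0"
    "\<And>n a b. nonoverlapping_intervals S n a b \<Longrightarrow> (\<Sum>i<n. b i - a i) < \<delta> \<Longrightarrow>
       (\<Sum>i<n. norm (f (b i) - f (a i))) < e"
proof -
  obtain \<delta> where "\<delta> > 0" "\<forall>n a b. nonoverlapping_intervals S n a b \<and> (\<Sum>i<n. b i - a i) < \<delta>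
      \<longrightarrow> (\<Sum>i<n. norm (f (b i) - f (a i))) < e"
    using assms unfolding abs_cont_on_iff by blast
  then show ?thesis using that by blast
qed

lemma abs_cont_on_subset:
  assumes "abs_cont_on S f" "S' \<subseteq> S"
  shows "abs_cont_on S' f"
proof -
  have "nonoverlapping_intervals S n a b" if "nonoverlapping_intervals S' n a b" for n a b
    using that assms(2) by (auto simp: nonoverlapping_intervals_def)
  then show ?thesis
    using assms(1) unfolding abs_cont_on_iff by meson
qed

lemma abs_cont_on_const: "abs_cont_on S (\<lambda>_. c)"
  unfolding abs_cont_on_iff by (intro allI impI exI[of _ 1]) simp

lemma abs_cont_on_ident: "abs_cont_on S (\<lambda>t. t)"
  unfolding abs_cont_on_iff
proof (intro allI impI)
  fix e :: real assume "e > 0"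
  have "(\<Sum>i<n. norm (b i - a i)) = (\<Sum>i<n. b i - a i)"
    if "nonoverlapping_intervals S n a b" for n a b
    using that by (intro sum.cong) (auto simp: nonoverlapping_intervals_def)
  then show "\<exists>\<delta>>0. \<forall>n a b. nonoverlapping_intervals S n a b \<and> (\<Sum>i<n. b i - a i) < \<delta>
      \<longrightarrow> (\<Sum>i<n. norm (b i - a i)) < e"
    using \<open>e > 0\<close> by (intro exI[of _ e]) auto
qed

lemma abs_cont_on_add:
  assumes f: "abs_cont_on S f" and g: "abs_cont_on S g"
  shows "abs_cont_on S (\<lambda>t. f t + g t)"
  unfolding abs_cont_on_iff
proof (intro allI impI)
  fix e :: real assume "e > 0"
  then have e2: "e / 2 > 0" by simp
  obtain \<delta>f where \<delta>f: "\<delta>f > 0" "\<And>n a b. nonoverlapping_intervals S n a b \<Longrightarrow> (\<Sum>i<n. b i - a i) < \<delta>f \<Longrightarrow>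
       (\<Sum>i<n. norm (f (b i) - f (a i))) < e / 2"
    using abs_cont_onE[OF f e2] by blast
  obtain \<delta>g where \<delta>g: "\<delta>g > 0" "\<And>n a b. nonoverlapping_intervals S n a b \<Longrightarrow> (\<Sum>i<n. b i - a i) < \<delta>g \<Longrightarrow>
       (\<Sum>i<n. norm (g (b i) - g (a i))) < e / 2"
    using abs_cont_onE[OF g e2] by blast
  have "(\<Sum>i<n. norm (f (b i) + g (b i) - (f (a i) + g (a i)))) < e"
    if "nonoverlapping_intervals S n a b" "(\<Sum>i<n. b i - a i) < min \<delta>f \<delta>g" for n a b
  proof -
    have "(\<Sum>i<n. norm (f (b i) + g (b i) - (f (a i) + g (a i))))
        \<le> (\<Sum>i<n. norm (f (b i) - f (a i)) + norm (g (b i) - g (a i)))"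
      by (intro sum_mono) (metis add_diff_add norm_triangle_ineq)
    also have "\<dots> < e / 2 + e / 2"
      unfolding sum.distrib using that \<delta>f(2) \<delta>g(2) by (intro add_strict_mono) auto
    finally show ?thesis by simp
  qed
  then show "\<exists>\<delta>>0. \<forall>n a b. nonoverlapping_intervals S n a b \<and> (\<Sum>i<n. b i - a i) < \<delta>
      \<longrightarrow> (\<Sum>i<n. norm (f (b i) + g (b i) - (f (a i) + g (a i)))) < e"
    using \<delta>f(1) \<delta>g(1) by (intro exI[of _ "min \<delta>f \<delta>g"]) auto
qed

lemma abs_cont_on_bounded_linear:
  assumes f: "abs_cont_on S f" and g: "bounded_linear g"
  shows "abs_cont_on S (\<lambda>t. g (f t))"
  unfolding abs_cont_on_iff
proof (intro allI impI)
  fix e :: real assume "e > 0"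
  obtain K where K: "K > 0" "\<And>x. norm (g x) \<le> norm x * K"
    using bounded_linear.pos_bounded[OF g] by blast
  obtain \<delta> where \<delta>: "\<delta> > 0" "\<And>n a b. nonoverlapping_intervals S n a b \<Longrightarrow> (\<Sum>i<n. b i - a i) < \<delta> \<Longrightarrow>
       (\<Sum>i<n. norm (f (b i) - f (a i))) < e / K"
    using abs_cont_onE[OF f] \<open>e > 0\<close> K(1) by (metis divide_pos_pos)
  have "(\<Sum>i<n. norm (g (f (b i)) - g (f (a i)))) < e"
    if "nonoverlapping_intervals S n a b" "(\<Sum>i<n. b i - a i) < \<delta>" for n a b
  proof -
    have "(\<Sum>i<n. norm (g (f (b i)) - g (f (a i)))) \<le> (\<Sum>i<n. norm (f (b i) - f (a i))) * K"
      unfolding sum_distrib_right linear_diff[OF bounded_linear.linear[OF g], symmetric]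
      by (intro sum_mono K(2))
    also have "\<dots> < e / K * K"
      using \<delta>(2)[OF that] K(1) by (intro mult_strict_right_mono)
    finally show ?thesis using K(1) by simp
  qed
  then show "\<exists>\<delta>>0. \<forall>n a b. nonoverlapping_intervals S n a b \<and> (\<Sum>i<n. b i - a i) < \<delta>
      \<longrightarrow> (\<Sum>i<n. norm (g (f (b i)) - g (f (a i)))) < e"
    using \<delta>(1) by blast
qed

lemma abs_cont_on_imp_continuous_on:
  assumes "abs_cont_on S f"
  shows "continuous_on S f"
  unfolding continuous_on_iff
proof (intro ballI allI impI)
  fix x e assume x: "x \<in> S" and "(e::real) > 0"
  then obtain \<delta> where \<delta>: "\<delta> > 0" "\<And>n a b. nonoverlapping_intervals S n a b \<Longrightarrow> (\<Sum>i<n. b i - a i) < \<delta> \<Longrightarrow>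
       (\<Sum>i<n. norm (f (b i) - f (a i))) < e"
    using abs_cont_onE[OF assms] by blast
  have "dist (f y) (f x) < e" if y: "y \<in> S" "dist y x < \<delta>" for y
  proof -
    have "norm (f (max x y) - f (min x y)) < e"
      using \<delta>(2)[of 1 "\<lambda>_. min x y" "\<lambda>_. max x y"] x y
      by (auto simp: nonoverlapping_intervals_def dist_real_def min_def max_def abs_real_def)
    then show ?thesis
      by (cases "x \<le> y") (auto simp: dist_norm norm_minus_commute max_def min_def)
  qed
  then show "\<exists>\<delta>>0. \<forall>y\<in>S. dist y x < \<delta> \<longrightarrow> dist (f y) (f x) < e"
    using \<delta>(1) by blast
qed


lemma null_sets_open_cover:
  assumes "N \<in> null_sets lebesgue" "e > 0"
  obtains U where "open U" "N \<subseteq> U" "U \<in> lmeasurable" "measure lebesgue U < e"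
proof -
  obtain U where U: "open U" "N \<subseteq> U" "U - N \<in> lmeasurable" "emeasure lebesgue (U - N) < ennreal e"
    using sets_lebesgue_outer_open[of N e] assms by auto
  have UN: "U = (U - N) \<union> N" using U by auto
  have N: "N \<in> lmeasurable" "measure lebesgue N = 0"
    using assms(1) by (simp_all add: fmeasurableI_null_sets measure_eq_0_null_sets)
  have "U \<in> lmeasurable" using UN U(3) N by (metis fmeasurable.Un)
  moreover have "measure lebesgue U \<le> measure lebesgue (U - N) + measure lebesgue N"
    using UN U(3) N by (metis measure_Un_le fmeasurableD)
  moreover have "measure lebesgue (U - N) < e"
    using U(3,4) assms(2) by (simp add: emeasure_eq_measure2 ennreal_less_iff)
  ultimately show ?thesis using that U N by fastforce
qed

lemma sum_lengths_le_measure: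
  assumes "nonoverlapping_intervals S n c d" "\<And>i. i < n \<Longrightarrow> {c i..d i} \<subseteq> U" "U \<in> lmeasurable"
  shows "(\<Sum>i<n. d i - c i) \<le> measure lebesgue U"
proof -
  have cd: "\<And>i. i < n \<Longrightarrow> c i \<le> d i"
    and disj: "pairwise (\<lambda>i j. disjnt {c i<..d i} {c j<..d j}) {..<n}"
    using assms(1) unfolding nonoverlapping_intervals_def pairwise_def disjnt_def by fastforce+
  have "(\<Sum>i<n. d i - c i) = (\<Sum>i<n. measure lebesgue {c i<..d i})"
    using cd by (intro sum.cong) auto
  also have "\<dots> = measure lebesgue (\<Union>i<n. {c i<..d i})"
    by (rule measure_UNION'[symmetric]) (use disj in \<open>auto intro: measurable_convex\<close>)
  also have "\<dots> \<le> measure lebesgue U"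
    using assms(2,3) by (intro measure_mono_fmeasurable) force+
  finally show ?thesis .
qed

lemma tagged_division_enumerate_nonoverlapping:
  assumes p: "p tagged_division_of {a..b}" and "Q \<subseteq> p" and pos: "\<forall>(x, K)\<in>Q. measure lborel K > 0"
  obtains n t c d where "nonoverlapping_intervals {a..b} n c d"
    "bij_betw (\<lambda>i. (t i, {c i..d i})) {..<n} Q"
proof -
  have "finite Q" using \<open>Q \<subseteq> p\<close> tagged_division_of_finite[OF p] by (rule finite_subset)
  then obtain h where h: "bij_betw h {..<card Q} Q"
    using ex_bij_betw_nat_finite lessThan_atLeast0 by metis
  define c where "c i = Inf (snd (h i))" for i
  define d where "d i = Sup (snd (h i))" for i
  have hQ: "h i \<in> Q" if "i < card Q" for i using h that by (auto simp: bij_betw_def)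
  have iv: "snd (h i) = {c i..d i} \<and> c i < d i \<and> {c i..d i} \<subseteq> {a..b}" if "i < card Q" for i
  proof -
    obtain x K where hx: "h i = (x, K)" by fastforce
    have "(x, K) \<in> p" "measure lborel K > 0" using hQ[OF that] hx \<open>Q \<subseteq> p\<close> pos by auto
    moreover obtain u v where "K = cbox u v" "K \<subseteq> {a..b}" using tagged_division_ofD(3,4)[OF p] calculation(1)
      by metis
    ultimately show ?thesis by (auto simp: c_def d_def hx cbox_interval split: if_splits)
  qed
  have "d i \<le> c j \<or> d j \<le> c i" if "i < card Q" "j < card Q" "i \<noteq> j" for i j
  proof (rule ccontr)
    assume "\<not> ?thesis"
    then have "max (c i) (c j) < min (d i) (d j)" using iv that by auto
    moreover have "c i \<le> max (c i) (c j)" "c j \<le> max (c i) (c j)"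
      "min (d i) (d j) \<le> d i" "min (d i) (d j) \<le> d j" by simp_all
    ultimately have "(max (c i) (c j) + min (d i) (d j)) / 2 \<in> {c i<..<d i} \<inter> {c j<..<d j}"
      by auto
    then have "(max (c i) (c j) + min (d i) (d j)) / 2 \<in> interior (snd (h i)) \<inter> interior (snd (h j))"
      using iv that by simp
    moreover have "h i \<noteq> h j" "h i \<in> p" "h j \<in> p"
      using h that hQ \<open>Q \<subseteq> p\<close> by (auto simp: bij_betw_def inj_on_def)
    ultimately show False
      using tagged_division_ofD(5)[OF p, of "fst (h i)" "snd (h i)" "fst (h j)" "snd (h j)"] by auto
  qed
  then have "nonoverlapping_intervals {a..b} (card Q) c d"
    using iv unfolding nonoverlapping_intervals_def by fastforce
  moreover have "bij_betw (\<lambda>i. (fst (h i), {c i..d i})) {..<card Q} Q"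
    using h by (rule bij_betw_cong[THEN iffD1, rotated]) (use iv in \<open>auto simp: prod_eq_iff\<close>)
  ultimately show ?thesis by (rule that)
qed

lemma abs_cont_on_division_sum_small:
  fixes f :: "real \<Rightarrow> real" and e :: real
  assumes "abs_cont_on {a..b} f" "e > 0"
  obtains \<delta> where "\<delta> > 0"
    "\<And>p Q U. p tagged_division_of {a..b} \<Longrightarrow> Q \<subseteq> p \<Longrightarrow>
       (\<And>x K. (x, K) \<in> Q \<Longrightarrow> measure lborel K > 0 \<and> K \<subseteq> U) \<Longrightarrow> U \<in> lmeasurable \<Longrightarrow>
       measure lebesgue U < \<delta> \<Longrightarrow> (\<Sum>(x, K)\<in>Q. \<bar>f (Sup K) - f (Inf K)\<bar>) < e"
proof -
  obtain \<delta> where \<delta>: "\<delta> > 0" "\<And>n c d. nonoverlapping_intervals {a..b} n c d \<Longrightarrow> (\<Sum>i<n. d i - c i) < \<delta> \<Longrightarrow>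
       (\<Sum>i<n. norm (f (d i) - f (c i))) < e"
    using abs_cont_onE[OF assms] by blast
  have "(\<Sum>(x, K)\<in>Q. \<bar>f (Sup K) - f (Inf K)\<bar>) < e"
    if p: "p tagged_division_of {a..b}" "Q \<subseteq> p" and QU: "\<And>x K. (x, K) \<in> Q \<Longrightarrow> measure lborel K > 0 \<and> K \<subseteq> U"
      and U: "U \<in> lmeasurable" "measure lebesgue U < \<delta>" for p Q U
  proof -
    have pos: "\<forall>(x, K)\<in>Q. measure lborel K > 0" using QU by blast
    obtain n t c d where cd: "nonoverlapping_intervals {a..b} n c d"
      and bij: "bij_betw (\<lambda>i. (t i, {c i..d i})) {..<n} Q"
      using tagged_division_enumerate_nonoverlapping[OF p pos] by blast
    have in_Q: "(t i, {c i..d i}) \<in> Q" if "i < n" for i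
      using bij that by (auto simp: bij_betw_def)
    have "c i \<le> d i" if "i < n" for i using cd that by (simp add: nonoverlapping_intervals_def)
    then have "(\<Sum>(x, K)\<in>Q. \<bar>f (Sup K) - f (Inf K)\<bar>) = (\<Sum>i<n. norm (f (d i) - f (c i)))"
      by (simp add: sum.reindex_bij_betw[OF bij, symmetric])
    also have "\<dots> < e"
    proof (rule \<delta>(2)[OF cd])
      have "{c i..d i} \<subseteq> U" if "i < n" for i
        using in_Q[OF that] QU by blast
      then have "(\<Sum>i<n. d i - c i) \<le> measure lebesgue U"
        by (rule sum_lengths_le_measure[OF cd _ U(1)])
      then show "(\<Sum>i<n. d i - c i) < \<delta>" using U(2) by linarith
    qed
    finally show ?thesis .
  qed
  with \<delta>(1) that show ?thesis by blast
qed

lemma has_real_derivative_nonpos_local_increment: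
  assumes "(f has_real_derivative D) (at t within S)" "D \<le> 0" "\<epsilon> > 0"
  shows "\<exists>\<rho>>0. \<forall>c\<in>S. \<forall>d\<in>S. c \<le> t \<longrightarrow> t \<le> d \<longrightarrow> dist c t < \<rho> \<longrightarrow> dist d t < \<rho> \<longrightarrow>
       f d - f c \<le> \<epsilon> * (d - c)"
proof -
  have "(f has_derivative (*) D) (at t within S)"
    using assms(1) by (simp add: has_field_derivative_def)
  then obtain \<rho> where \<rho>: "\<rho> > 0"
    "\<And>y. y \<in> S \<Longrightarrow> norm (y - t) < \<rho> \<Longrightarrow> norm (f y - f t - D * (y - t)) \<le> \<epsilon> * norm (y - t)"
    using assms(3) unfolding has_derivative_within_alt by blast
  have "f d - f c \<le> \<epsilon> * (d - c)"
    if "c \<in> S" "d \<in> S" "c \<le> t" "t \<le> d" "dist c t < \<rho>" "dist d t < \<rho>" for c d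
  proof -
    have "f d - f t \<le> D * (d - t) + \<epsilon> * (d - t)" "f t - f c \<le> D * (t - c) + \<epsilon> * (t - c)"
      using \<rho>(2)[of d] \<rho>(2)[of c] that by (auto simp: dist_norm abs_le_iff algebra_simps)
    moreover have "D * (d - t) \<le> 0" "D * (t - c) \<le> 0"
      using assms(2) that by (simp_all add: mult_nonpos_nonneg)
    ultimately show ?thesis by (simp add: algebra_simps)
  qed
  with \<rho>(1) show ?thesis by blast
qed

lemma gauge_controlling_increments:
  assumes "open U" "\<epsilon> > 0"
    and der: "\<And>t. t \<in> {a..b} - U \<Longrightarrow> (f has_real_derivative f' t) (at t within {a..b}) \<and> f' t \<le> 0"
  shows "\<exists>\<rho>. \<forall>t. \<rho> t > 0 \<and> (t \<in> U \<longrightarrow> ball t (\<rho> t) \<subseteq> U) \<and>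
     (t \<in> {a..b} - U \<longrightarrow> (\<forall>c\<in>{a..b}. \<forall>d\<in>{a..b}. c \<le> t \<longrightarrow> t \<le> d \<longrightarrow>
        dist c t < \<rho> t \<longrightarrow> dist d t < \<rho> t \<longrightarrow> f d - f c \<le> \<epsilon> * (d - c)))"
proof -
  have "\<exists>r>0. (t \<in> U \<longrightarrow> ball t r \<subseteq> U) \<and>
     (t \<in> {a..b} - U \<longrightarrow> (\<forall>c\<in>{a..b}. \<forall>d\<in>{a..b}. c \<le> t \<longrightarrow> t \<le> d \<longrightarrow>
        dist c t < r \<longrightarrow> dist d t < r \<longrightarrow> f d - f c \<le> \<epsilon> * (d - c)))" for t
  proof -
    consider "t \<in> U" | "t \<in> {a..b} - U" | "t \<notin> U \<union> {a..b}" by blast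
    then show ?thesis
    proof cases
      case 1
      then obtain r where "r > 0" "ball t r \<subseteq> U" using assms(1) openE by blast
      then show ?thesis using 1 by blast
    next
      case 2
      then show ?thesis
        using has_real_derivative_nonpos_local_increment[OF _ _ \<open>\<epsilon> > 0\<close>] der by blast
    next
      case 3
      then show ?thesis by (intro exI[of _ 1]) auto
    qed
  qed
  then show ?thesis by metis
qed

lemma tagged_division_increment_le:
  fixes f :: "real \<Rightarrow> real"
  assumes "a \<le> b" and p: "p tagged_division_of {a..b}" "(\<lambda>t. ball t (\<rho> t)) fine p" and "\<epsilon> \<ge> 0"
    and off_U: "\<And>t c d. t \<in> {a..b} - U \<Longrightarrow> c \<in> {a..b} \<Longrightarrow> d \<in> {a..b} \<Longrightarrow> c \<le> t \<Longrightarrow> t \<le> d \<Longrightarrow>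
        dist c t < \<rho> t \<Longrightarrow> dist d t < \<rho> t \<Longrightarrow> f d - f c \<le> \<epsilon> * (d - c)"
  shows "f b - f a \<le> \<epsilon> * (b - a) +
    (\<Sum>(x, K)\<in>{(x, K) \<in> p. x \<in> U \<and> measure lborel K > 0}. \<bar>f (Sup K) - f (Inf K)\<bar>)"
proof -
  define Q where "Q = {(x, K) \<in> p. x \<in> U \<and> measure lborel K > 0}"
  have term_le: "f (Sup K) - f (Inf K) \<le> \<epsilon> * measure lborel K + (if (x, K) \<in> Q then \<bar>f (Sup K) - f (Inf K)\<bar> else 0)"
    if xK: "(x, K) \<in> p" for x K
  proof -
    obtain c d where "K = cbox c d" using tagged_division_ofD(4)[OF p(1) xK] by blast
    then have K: "K = {c..d}" by (simp add: cbox_interval)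
    have x: "x \<in> K" "K \<subseteq> {a..b}" "K \<subseteq> ball x (\<rho> x)"
      using tagged_division_ofD(2,3)[OF p(1) xK] p(2) xK unfolding fine_def by auto
    show ?thesis
    proof (cases "x \<in> U")
      case False
      have "c \<in> K" "d \<in> K" using K x by auto
      then have "c \<in> ball x (\<rho> x)" "d \<in> ball x (\<rho> x)" using x by auto
      then have "f d - f c \<le> \<epsilon> * (d - c)"
        using off_U[of x c d] K x False by (auto simp: dist_commute)
      then show ?thesis using K x by auto
    next
      case True
      have "f (Sup K) - f (Inf K) = f d - f c" "measure lborel K = d - c" "0 \<le> \<epsilon> * (d - c)" "c \<le> d"
        using K x \<open>\<epsilon> \<ge> 0\<close> by auto
      moreover have "(x, K) \<in> Q" if "c < d" using that True xK K by (simp add: Q_def)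
      ultimately show ?thesis using abs_ge_self[of "f d - f c"] by (cases "c < d") auto
    qed
  qed
  have "f b - f a = (\<Sum>(x, K)\<in>p. f (Sup K) - f (Inf K))"
    using additive_tagged_division_1[OF \<open>a \<le> b\<close> p(1), of f] by simp
  also have "\<dots> \<le> (\<Sum>(x, K)\<in>p. \<epsilon> * measure lborel K +
      (if (x, K) \<in> Q then \<bar>f (Sup K) - f (Inf K)\<bar> else 0))"
    by (rule sum_mono) (use term_le in auto)
  also have "\<dots> = \<epsilon> * (b - a) + (\<Sum>(x, K)\<in>Q. \<bar>f (Sup K) - f (Inf K)\<bar>)"
  proof -
    have "Q \<subseteq> p" by (auto simp: Q_def)
    then have "p \<inter> Q = Q" by auto
    moreover have "(\<Sum>(x, K)\<in>p. measure lborel K) = b - a"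
      using additive_content_tagged_division[of p a b] p(1) \<open>a \<le> b\<close>
      by (simp add: cbox_interval split_def)
    ultimately show ?thesis
      using tagged_division_of_finite[OF p(1)]
      by (simp add: split_def sum.distrib sum.If_cases sum_distrib_left[symmetric])
  qed
  finally show ?thesis unfolding Q_def .
qed

text \<open>Cover the exceptional null set by an open set U of small measure and take a tagged division
  of [a, b] fine enough for the gauge above. Intervals tagged outside U contribute at most \<epsilon>
  times their length; those tagged in U have total length below the modulus of absolute
  continuity, so together they contribute less than \<epsilon>.\<close>
lemma abs_cont_on_increment_le_eps:
  fixes f :: "real \<Rightarrow> real"
  assumes "a \<le> b" and ac: "abs_cont_on {a..b} f"
    and der: "AE t in lebesgue. t \<in> {a..b} \<longrightarrow> (f has_real_derivative f' t) (at t within {a..b})"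
    and nonpos: "AE t in lebesgue. t \<in> {a..b} \<longrightarrow> f' t \<le> 0"
    and "\<epsilon> > 0"
  shows "f b - f a \<le> \<epsilon> * (b - a) + \<epsilon>"
proof -
  obtain \<delta> where "\<delta> > 0" and small: "\<And>p Q U. p tagged_division_of {a..b} \<Longrightarrow> Q \<subseteq> p \<Longrightarrow>
       (\<And>x K. (x, K) \<in> Q \<Longrightarrow> measure lborel K > 0 \<and> K \<subseteq> U) \<Longrightarrow> U \<in> lmeasurable \<Longrightarrow>
       measure lebesgue U < \<delta> \<Longrightarrow> (\<Sum>(x, K)\<in>Q. \<bar>f (Sup K) - f (Inf K)\<bar>) < \<epsilon>"
    using abs_cont_on_division_sum_small[OF ac \<open>\<epsilon> > 0\<close>] by blast
  obtain N where N: "\<And>t. t \<in> space lebesgue - N \<Longrightarrow>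
       (t \<in> {a..b} \<longrightarrow> (f has_real_derivative f' t) (at t within {a..b})) \<and> (t \<in> {a..b} \<longrightarrow> f' t \<le> 0)"
    and "N \<in> null_sets lebesgue"
    using AE_E3[OF eventually_conj[OF der nonpos]] by blast
  obtain U where U: "open U" "N \<subseteq> U" "U \<in> lmeasurable" "measure lebesgue U < \<delta>"
    using null_sets_open_cover[OF \<open>N \<in> null_sets lebesgue\<close> \<open>\<delta> > 0\<close>] by blast
  have "(f has_real_derivative f' t) (at t within {a..b}) \<and> f' t \<le> 0" if "t \<in> {a..b} - U" for t
    using N U(2) that by auto
  then obtain \<rho> where "\<forall>t. \<rho> t > 0 \<and> (t \<in> U \<longrightarrow> ball t (\<rho> t) \<subseteq> U) \<and>
     (t \<in> {a..b} - U \<longrightarrow> (\<forall>c\<in>{a..b}. \<forall>d\<in>{a..b}. c \<le> t \<longrightarrow> t \<le> d \<longrightarrow>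
        dist c t < \<rho> t \<longrightarrow> dist d t < \<rho> t \<longrightarrow> f d - f c \<le> \<epsilon> * (d - c)))"
    using gauge_controlling_increments[OF U(1) \<open>\<epsilon> > 0\<close>] by blast
  then have \<rho>: "\<And>t. \<rho> t > 0" "\<And>t. t \<in> U \<Longrightarrow> ball t (\<rho> t) \<subseteq> U"
    "\<And>t c d. t \<in> {a..b} - U \<Longrightarrow> c \<in> {a..b} \<Longrightarrow> d \<in> {a..b} \<Longrightarrow> c \<le> t \<Longrightarrow> t \<le> d \<Longrightarrow>
        dist c t < \<rho> t \<Longrightarrow> dist d t < \<rho> t \<Longrightarrow> f d - f c \<le> \<epsilon> * (d - c)"
    by blast+
  obtain p where p: "p tagged_division_of {a..b}" "(\<lambda>t. ball t (\<rho> t)) fine p"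
    using fine_division_exists_real[of "\<lambda>t. ball t (\<rho> t)"] \<rho>(1) by (auto simp: gauge_ball_dependent)
  define Q where "Q = {(x, K) \<in> p. x \<in> U \<and> measure lborel K > 0}"
  have "f b - f a \<le> \<epsilon> * (b - a) + (\<Sum>(x, K)\<in>Q. \<bar>f (Sup K) - f (Inf K)\<bar>)"
    unfolding Q_def
    by (rule tagged_division_increment_le[OF \<open>a \<le> b\<close> p less_imp_le[OF \<open>\<epsilon> > 0\<close>] \<rho>(3)])
  also have "(\<Sum>(x, K)\<in>Q. \<bar>f (Sup K) - f (Inf K)\<bar>) < \<epsilon>"
  proof (rule small[OF p(1) _ _ U(3,4)])
    show "Q \<subseteq> p" by (auto simp: Q_def)
    show "measure lborel K > 0 \<and> K \<subseteq> U" if "(x, K) \<in> Q" for x K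
      using that p(2) \<rho>(2) unfolding Q_def fine_def by blast
  qed
  finally show ?thesis by simp
qed

lemma abs_cont_on_nonpos_derivative_imp_le:
  fixes f :: "real \<Rightarrow> real"
  assumes "a \<le> b" "abs_cont_on {a..b} f"
    and "AE t in lebesgue. t \<in> {a..b} \<longrightarrow> (f has_real_derivative f' t) (at t within {a..b})"
    and "AE t in lebesgue. t \<in> {a..b} \<longrightarrow> f' t \<le> 0"
  shows "f b \<le> f a"
proof (rule ccontr)
  assume "\<not> f b \<le> f a"
  define \<epsilon> where "\<epsilon> = (f b - f a) / (2 * (b - a + 1))"
  have "\<epsilon> > 0" using \<open>\<not> f b \<le> f a\<close> \<open>a \<le> b\<close> by (simp add: \<epsilon>_def)
  have "f b - f a \<le> \<epsilon> * (b - a) + \<epsilon>"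
    by (rule abs_cont_on_increment_le_eps[OF assms \<open>\<epsilon> > 0\<close>])
  also have "\<dots> = \<epsilon> * (b - a + 1)" by (simp add: algebra_simps)
  also have "\<dots> = (f b - f a) / 2"
    using \<open>a \<le> b\<close> by (simp add: \<epsilon>_def field_simps)
  finally have "f b - f a \<le> (f b - f a) / 2" .
  moreover have "f b - f a > 0" using \<open>\<not> f b \<le> f a\<close> by simp
  ultimately show False by (simp add: field_simps)
qed

lemma abs_cont_on_increment_le:
  fixes f :: "real \<Rightarrow> real"
  assumes ac: "abs_cont_on {a..b} f"
    and der: "AE t in lebesgue. t \<in> {a..b} \<longrightarrow> (f has_real_derivative f' t) (at t within {a..b})"
    and bound: "AE t in lebesgue. t \<in> {a..b} \<longrightarrow> f' t \<le> M"
    and s: "a \<le> s" "s \<le> s'" "s' \<le> b"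
  shows "f s' - f s \<le> M * (s' - s)"
proof -
  define g where "g t = f t - M * t" for t
  have sub: "{s..s'} \<subseteq> {a..b}" using s by auto
  have "g = (\<lambda>t. f t + (- M) * t)" by (auto simp: g_def)
  moreover have "abs_cont_on {s..s'} (\<lambda>t. f t + (- M) * t)"
    by (rule abs_cont_on_add[OF abs_cont_on_subset[OF ac sub]
          abs_cont_on_bounded_linear[OF abs_cont_on_ident bounded_linear_mult_right]])
  ultimately have "abs_cont_on {s..s'} g" by simp
  moreover have "AE t in lebesgue. t \<in> {s..s'} \<longrightarrow>
      (g has_real_derivative f' t - M * 1) (at t within {s..s'})"
    using der
  proof (rule eventually_mono, intro impI)
    fix t assume "t \<in> {a..b} \<longrightarrow> (f has_real_derivative f' t) (at t within {a..b})" "t \<in> {s..s'}"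
    then have "(f has_real_derivative f' t) (at t within {a..b})" using sub by blast
    then show "(g has_real_derivative f' t - M * 1) (at t within {s..s'})"
      unfolding g_def by (rule DERIV_diff[OF DERIV_subset[OF _ sub] DERIV_cmult[OF DERIV_ident]])
  qed
  moreover have "AE t in lebesgue. t \<in> {s..s'} \<longrightarrow> f' t - M * 1 \<le> 0"
    using bound by (rule eventually_mono) (use sub in auto)
  ultimately have "g s' \<le> g s"
    by (rule abs_cont_on_nonpos_derivative_imp_le[OF s(2)])
  then show ?thesis by (simp add: g_def algebra_simps)
qed

lemma abs_cont_on_increment_ge:
  fixes f :: "real \<Rightarrow> real"
  assumes ac: "abs_cont_on {a..b} f"
    and der: "AE t in lebesgue. t \<in> {a..b} \<longrightarrow> (f has_real_derivative f' t) (at t within {a..b})"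
    and bound: "AE t in lebesgue. t \<in> {a..b} \<longrightarrow> m \<le> f' t"
    and "a \<le> s" "s \<le> s'" "s' \<le> b"
  shows "m * (s' - s) \<le> f s' - f s"
proof -
  have "abs_cont_on {a..b} (\<lambda>t. - f t)"
    using abs_cont_on_bounded_linear[OF ac bounded_linear_minus[OF bounded_linear_ident]] by simp
  moreover have "AE t in lebesgue. t \<in> {a..b} \<longrightarrow>
      ((\<lambda>t. - f t) has_real_derivative - f' t) (at t within {a..b})"
    using der by (rule eventually_mono) (use DERIV_minus in blast)
  moreover have "AE t in lebesgue. t \<in> {a..b} \<longrightarrow> - f' t \<le> - m"
    using bound by (rule eventually_mono) simp
  ultimately have "- f s' - - f s \<le> - m * (s' - s)"
    using assms(4-6) by (rule abs_cont_on_increment_le)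
  then show ?thesis by simp
qed

lemma abs_cont_on_zero_derivative_imp_constant:
  fixes f :: "real \<Rightarrow> real"
  assumes ac: "abs_cont_on {a..b} f"
    and der: "AE t in lebesgue. t \<in> {a..b} \<longrightarrow> (f has_real_derivative f' t) (at t within {a..b})"
    and zero: "\<And>t. t \<in> {a..b} \<Longrightarrow> f' t = 0"
    and "t \<in> {a..b}"
  shows "f t = f a"
proof -
  have "a \<le> t" "t \<le> b" using assms(4) by auto
  have bound: "AE t in lebesgue. t \<in> {a..b} \<longrightarrow> f' t \<le> 0 \<and> 0 \<le> f' t"
    using zero by simp
  have "f t - f a \<le> 0 * (t - a)"
    by (rule abs_cont_on_increment_le[OF ac der _ order.refl \<open>a \<le> t\<close> \<open>t \<le> b\<close>])
      (use bound in \<open>rule eventually_mono, blast\<close>)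
  moreover have "0 * (t - a) \<le> f t - f a"
    by (rule abs_cont_on_increment_ge[OF ac der _ order.refl \<open>a \<le> t\<close> \<open>t \<le> b\<close>])
      (use bound in \<open>rule eventually_mono, blast\<close>)
  ultimately show ?thesis by simp
qed

lemma AE_ex_in_open_interval:
  fixes c d :: real
  assumes "c < d" and "AE t in lebesgue. t \<in> {c<..<d} \<longrightarrow> P t"
  shows "\<exists>t\<in>{c<..<d}. P t"
proof (rule ccontr)
  assume "\<not> (\<exists>t\<in>{c<..<d}. P t)"
  obtain N where N: "{t \<in> space lebesgue. \<not> (t \<in> {c<..<d} \<longrightarrow> P t)} \<subseteq> N"
    "emeasure lebesgue N = 0" "N \<in> sets lebesgue"
    using assms(2) by (rule AE_E)
  have "{c<..<d} \<subseteq> N" using N(1) \<open>\<not> (\<exists>t\<in>{c<..<d}. P t)\<close> by auto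
  then have "emeasure lebesgue {c<..<d} \<le> emeasure lebesgue N" using N(3) by (rule emeasure_mono)
  then show False using N(2) \<open>c < d\<close> by simp
qed

lemma continuous_on_AE_zero_imp_zero:
  fixes g :: "real \<Rightarrow> real"
  assumes "a < b" and cont: "continuous_on {a..b} g"
    and ae: "AE t in lebesgue. t \<in> {a..b} \<longrightarrow> g t = 0"
    and t0: "t0 \<in> {a..b}"
  shows "g t0 = 0"
proof (rule ccontr)
  assume "g t0 \<noteq> 0"
  then have "\<bar>g t0\<bar> > 0" by simp
  then obtain r where "r > 0"
    and r: "\<forall>t\<in>{a..b}. dist t t0 < r \<longrightarrow> dist (g t) (g t0) < \<bar>g t0\<bar>"
    using cont t0 unfolding continuous_on_iff by blast
  define c where "c = max a (t0 - r)"
  define d where "d = min b (t0 + r)"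
  have cd: "a \<le> c" "t0 - r \<le> c" "d \<le> b" "d \<le> t0 + r" by (simp_all add: c_def d_def)
  have "c < d"
    using \<open>a < b\<close> \<open>r > 0\<close> t0 unfolding c_def d_def by (simp add: max_less_iff_conj)
  have sub: "{c<..<d} \<subseteq> {a..b}" using cd by auto
  have ae': "AE t in lebesgue. t \<in> {c<..<d} \<longrightarrow> g t = 0"
    using ae
  proof (rule eventually_mono)
    fix t assume h: "t \<in> {a..b} \<longrightarrow> g t = 0"
    show "t \<in> {c<..<d} \<longrightarrow> g t = 0"
    proof
      assume "t \<in> {c<..<d}"
      with sub have "t \<in> {a..b}" by (rule subsetD)
      with h show "g t = 0" by (rule mp)
    qed
  qed
  obtain t where t: "t \<in> {c<..<d}" "g t = 0" using AE_ex_in_open_interval[OF \<open>c < d\<close> ae'] by blast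
  have "t \<in> {a..b}" using sub t(1) by (rule subsetD)
  moreover have "dist t t0 < r" using t(1) cd by (simp add: dist_real_def abs_less_iff)
  ultimately have "dist (g t) (g t0) < \<bar>g t0\<bar>" using r by blast
  then show False using t(2) by (simp add: dist_real_def)
qed

lemma has_real_derivative_zero_if_vanishing_on_open_interval:
  fixes h :: "real \<Rightarrow> real"
  assumes zero: "\<forall>s\<in>{c<..<d}. h s = 0" and sub: "{c<..<d} \<subseteq> S" and t: "t \<in> {c<..<d}"
    and der: "(h has_real_derivative D) (at t within S)"
  shows "D = 0"
proof -
  have "t \<in> interior S"
    by (meson interior_maximal open_greaterThanLessThan sub t subsetD)
  then have "at t within S = at t" by (rule at_within_interior)
  then have "(h has_real_derivative D) (at t)" using der by simp
  moreover have "(h has_real_derivative 0) (at t)"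
    by (rule has_field_derivative_transform_within_open[of "\<lambda>_. 0" 0 t "{c<..<d}"])
      (use zero t in auto)
  ultimately show ?thesis by (rule DERIV_unique)
qed

section \<open>The vector fields \<partial>x and x \<partial>y\<close>

lemma inner_X1: "l \<bullet> X 1 p = fst l"
  by (cases l) (simp add: X_def)

lemma inner_X2: "l \<bullet> X 2 p = snd l * fst p"
  by (cases l) (simp add: X_def)

lemma Ham_eq: "Ham l p w = fst w * fst l + snd w * (snd l * fst p)"
  unfolding Ham_def inner_X1 inner_X2 ..

lemma scaleR_X_add: "a *\<^sub>R X 1 p + b *\<^sub>R X 2 p = (a, b * fst p)"
  by (simp add: X_def)

lemma switching_eq:
  "switching lam \<gamma> 1 t = fst (lam t)" "switching lam \<gamma> 2 t = snd (lam t) * fst (\<gamma> t)"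
  unfolding switching_def inner_X1 inner_X2 by (rule refl)+

lemma Ham_state_derivative_unique:
  assumes "((\<lambda>p. Ham l p w) has_derivative (\<lambda>h. - (W \<bullet> h))) (at P)"
  shows "W = (- (snd w * snd l), 0)"
proof -
  have "((\<lambda>p. Ham l p w) has_derivative (\<lambda>h. snd w * (snd l * fst h))) (at P)"
    unfolding Ham_eq by (auto intro!: derivative_eq_intros)
  then have eq: "(\<lambda>h. - (W \<bullet> h)) = (\<lambda>h. snd w * (snd l * fst h))"
    by (rule has_derivative_unique[OF assms])
  have "- (W \<bullet> (1, 0)) = snd w * snd l" "- (W \<bullet> (0, 1)) = 0"
    using fun_cong[OF eq, of "(1, 0)"] fun_cong[OF eq, of "(0, 1)"] by simp_all
  then show ?thesis by (cases W) simp
qed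

lemma has_vector_derivative_fst_real:
  "(f has_vector_derivative v) F \<Longrightarrow> ((\<lambda>t. fst (f t)) has_real_derivative fst v) F"
  using bounded_linear.has_vector_derivative[OF bounded_linear_fst]
  by (simp add: has_real_derivative_iff_has_vector_derivative)

lemma has_vector_derivative_snd_real:
  "(f has_vector_derivative v) F \<Longrightarrow> ((\<lambda>t. snd (f t)) has_real_derivative snd v) F"
  using bounded_linear.has_vector_derivative[OF bounded_linear_snd]
  by (simp add: has_real_derivative_iff_has_vector_derivative)

lemma abs_cont_on_fst: "abs_cont_on S f \<Longrightarrow> abs_cont_on S (\<lambda>t. fst (f t))"
  by (rule abs_cont_on_bounded_linear[OF _ bounded_linear_fst])

lemma abs_cont_on_snd: "abs_cont_on S f \<Longrightarrow> abs_cont_on S (\<lambda>t. snd (f t))"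
  by (rule abs_cont_on_bounded_linear[OF _ bounded_linear_snd])

lemma nonconstant_pos:
  assumes "nonconstant T \<gamma>"
  shows "T > 0"
proof -
  obtain s t where "s \<in> {0..T}" "t \<in> {0..T}" "\<gamma> s \<noteq> \<gamma> t"
    using assms unfolding nonconstant_def by blast
  then have "s \<noteq> t" by blast
  with \<open>s \<in> {0..T}\<close> \<open>t \<in> {0..T}\<close> show ?thesis by auto
qed

lemma nonconstant_not_constant: "nonconstant T \<gamma> \<Longrightarrow> \<exists>t\<in>{0..T}. \<gamma> t \<noteq> \<gamma> 0"
  unfolding nonconstant_def by metis

lemma admissible_state_derivative:
  assumes "admissible T \<gamma> u"
  shows "AE t in lebesgue. t \<in> {0..T} \<longrightarrow>
    (\<gamma> has_vector_derivative (fst (u t), snd (u t) * fst (\<gamma> t))) (at t within {0..T})"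
  using assms unfolding admissible_def scaleR_X_add by blast

lemma admissible_fst_state_derivative:
  assumes "admissible T \<gamma> u"
  shows "AE t in lebesgue. t \<in> {0..T} \<longrightarrow>
    ((\<lambda>s. fst (\<gamma> s)) has_real_derivative fst (u t)) (at t within {0..T})"
  using admissible_state_derivative[OF assms]
  by (rule eventually_mono) (metis has_vector_derivative_fst_real fst_conv)

lemma admissible_snd_state_derivative:
  assumes "admissible T \<gamma> u"
  shows "AE t in lebesgue. t \<in> {0..T} \<longrightarrow>
    ((\<lambda>s. snd (\<gamma> s)) has_real_derivative snd (u t) * fst (\<gamma> t)) (at t within {0..T})"
  using admissible_state_derivative[OF assms]
  by (rule eventually_mono) (metis has_vector_derivative_snd_real snd_conv)

section \<open>Extremals with a singular arc\<close>

definition saturated_fst_control :: "real \<Rightarrow> (real \<Rightarrow> real \<times> real) \<Rightarrow> bool" where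
  "saturated_fst_control T u \<longleftrightarrow>
     (AE t in lebesgue. t \<in> {0..T} \<longrightarrow> fst (u t) = 1) \<or>
     (AE t in lebesgue. t \<in> {0..T} \<longrightarrow> fst (u t) = -1)"

lemma saturated_fst_controlI:
  "\<bar>s\<bar> = 1 \<Longrightarrow> AE t in lebesgue. t \<in> {0..T} \<longrightarrow> fst (u t) = s \<Longrightarrow> saturated_fst_control T u"
  unfolding saturated_fst_control_def by (cases "s \<ge> 0") auto

lemma saturated_fst_controlE:
  assumes "saturated_fst_control T u"
  obtains s where "\<bar>s\<bar> = 1" "AE t in lebesgue. t \<in> {0..T} \<longrightarrow> fst (u t) = s"
  using assms that[of 1] that[of "-1"] unfolding saturated_fst_control_def by auto

context
  fixes T lam \<gamma> u
  assumes extremal: "extremal_pair T lam \<gamma> u"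
begin

lemma extremal_admissible: "admissible T \<gamma> u"
  using extremal by (simp add: extremal_pair_def)

lemma extremal_costate_nonzero: "t \<in> {0..T} \<Longrightarrow> lam t \<noteq> 0"
  using extremal by (simp add: extremal_pair_def)

lemma extremal_costate_abs_cont: "abs_cont_on {0..T} lam"
  using extremal by (simp add: extremal_pair_def)

lemma extremal_costate_derivative:
  "AE t in lebesgue. t \<in> {0..T} \<longrightarrow>
     (lam has_vector_derivative (- (snd (u t) * snd (lam t)), 0)) (at t within {0..T})"
proof -
  have "AE t in lebesgue. t \<in> {0..T} \<longrightarrow>
        (\<exists>w. (lam has_vector_derivative w) (at t within {0..T}) \<and>
             ((\<lambda>p. Ham (lam t) p (u t)) has_derivative (\<lambda>h. - (w \<bullet> h))) (at (\<gamma> t)))"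
    using extremal by (simp add: extremal_pair_def)
  then show ?thesis
    by (rule eventually_mono) (metis Ham_state_derivative_unique)
qed

lemma extremal_fst_costate_derivative:
  "AE t in lebesgue. t \<in> {0..T} \<longrightarrow>
     ((\<lambda>s. fst (lam s)) has_real_derivative - (snd (u t) * snd (lam t))) (at t within {0..T})"
  using extremal_costate_derivative
  by (rule eventually_mono) (metis has_vector_derivative_fst_real fst_conv)

lemma extremal_snd_costate_constant:
  assumes "t \<in> {0..T}"
  shows "snd (lam t) = snd (lam 0)"
proof (rule abs_cont_on_zero_derivative_imp_constant[OF abs_cont_on_snd[OF extremal_costate_abs_cont]])
  show "AE t in lebesgue. t \<in> {0..T} \<longrightarrow>
      ((\<lambda>s. snd (lam s)) has_real_derivative 0) (at t within {0..T})"
    using extremal_costate_derivative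
    by (rule eventually_mono) (metis has_vector_derivative_snd_real snd_conv)
qed (use assms in simp_all)

lemma extremal_maximality:
  obtains lam0 where "lam0 \<ge> 0" "AE t in lebesgue. t \<in> {0..T} \<longrightarrow>
     fst (u t) * fst (lam t) + snd (u t) * (snd (lam t) * fst (\<gamma> t)) = lam0 \<and>
     \<bar>fst (lam t)\<bar> + \<bar>snd (lam t) * fst (\<gamma> t)\<bar> = lam0"
proof -
  obtain lam0 where "lam0 \<ge> 0" and max: "AE t in lebesgue. t \<in> {0..T} \<longrightarrow>
        Ham (lam t) (\<gamma> t) (u t) = \<bar>lam t \<bullet> X 1 (\<gamma> t)\<bar> + \<bar>lam t \<bullet> X 2 (\<gamma> t)\<bar> \<and>
        \<bar>lam t \<bullet> X 1 (\<gamma> t)\<bar> + \<bar>lam t \<bullet> X 2 (\<gamma> t)\<bar> = lam0"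
    using extremal unfolding extremal_pair_def by blast
  from max have "AE t in lebesgue. t \<in> {0..T} \<longrightarrow>
     fst (u t) * fst (lam t) + snd (u t) * (snd (lam t) * fst (\<gamma> t)) = lam0 \<and>
     \<bar>fst (lam t)\<bar> + \<bar>snd (lam t) * fst (\<gamma> t)\<bar> = lam0"
    unfolding Ham_eq inner_X1 inner_X2 by (rule eventually_mono) argo
  with \<open>lam0 \<ge> 0\<close> show ?thesis by (rule that)
qed

lemma extremal_zero_Hamiltonian_imp_constant:
  assumes "T > 0"
    and zero: "AE t in lebesgue. t \<in> {0..T} \<longrightarrow> \<bar>fst (lam t)\<bar> + \<bar>snd (lam t) * fst (\<gamma> t)\<bar> = 0"
    and "t \<in> {0..T}"
  shows "\<gamma> t = \<gamma> 0"
proof -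
  have ac: "abs_cont_on {0..T} \<gamma>" using extremal_admissible by (simp add: admissible_def)
  have abs_sum_zero: "a = 0 \<and> b = 0" if "\<bar>a\<bar> + \<bar>b\<bar> = 0" for a b :: real
    using that abs_ge_zero[of a] abs_ge_zero[of b] by linarith
  have costate_zero: "fst (lam s) = 0" if "s \<in> {0..T}" for s
  proof (rule continuous_on_AE_zero_imp_zero[OF \<open>T > 0\<close> _ _ that])
    show "continuous_on {0..T} (\<lambda>t. fst (lam t))"
      by (intro abs_cont_on_imp_continuous_on abs_cont_on_fst extremal_costate_abs_cont)
    show "AE t in lebesgue. t \<in> {0..T} \<longrightarrow> fst (lam t) = 0"
      using zero by (rule eventually_mono) (use abs_sum_zero in blast)
  qed
  have product_zero: "snd (lam s) * fst (\<gamma> s) = 0" if "s \<in> {0..T}" for s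
  proof (rule continuous_on_AE_zero_imp_zero[OF \<open>T > 0\<close> _ _ that])
    show "continuous_on {0..T} (\<lambda>t. snd (lam t) * fst (\<gamma> t))"
      by (intro continuous_on_mult abs_cont_on_imp_continuous_on abs_cont_on_snd abs_cont_on_fst
          extremal_costate_abs_cont ac)
    show "AE t in lebesgue. t \<in> {0..T} \<longrightarrow> snd (lam t) * fst (\<gamma> t) = 0"
      using zero by (rule eventually_mono) (use abs_sum_zero in blast)
  qed
  have x_zero: "fst (\<gamma> s) = 0" if "s \<in> {0..T}" for s
  proof -
    have "snd (lam s) \<noteq> 0"
      using costate_zero[OF that] extremal_costate_nonzero[OF that] by (auto simp: prod_eq_iff)
    then show ?thesis using product_zero[OF that] by simp
  qed
  have "snd (\<gamma> t) = snd (\<gamma> 0)"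
    by (rule abs_cont_on_zero_derivative_imp_constant[OF abs_cont_on_snd[OF ac]
          admissible_snd_state_derivative[OF extremal_admissible] _ \<open>t \<in> {0..T}\<close>])
      (simp add: x_zero)
  moreover have "fst (\<gamma> t) = fst (\<gamma> 0)"
    using x_zero \<open>t \<in> {0..T}\<close> \<open>T > 0\<close> by simp
  ultimately show ?thesis by (simp add: prod_eq_iff)
qed

lemma extremal_Hamiltonian_pos:
  assumes "nonconstant T \<gamma>"
  obtains lam0 where "lam0 > 0" "AE t in lebesgue. t \<in> {0..T} \<longrightarrow>
     fst (u t) * fst (lam t) + snd (u t) * (snd (lam t) * fst (\<gamma> t)) = lam0 \<and>
     \<bar>fst (lam t)\<bar> + \<bar>snd (lam t) * fst (\<gamma> t)\<bar> = lam0"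
proof -
  obtain lam0 where "lam0 \<ge> 0" and max: "AE t in lebesgue. t \<in> {0..T} \<longrightarrow>
     fst (u t) * fst (lam t) + snd (u t) * (snd (lam t) * fst (\<gamma> t)) = lam0 \<and>
     \<bar>fst (lam t)\<bar> + \<bar>snd (lam t) * fst (\<gamma> t)\<bar> = lam0"
    by (rule extremal_maximality)
  have "lam0 \<noteq> 0"
  proof
    assume "lam0 = 0"
    with max have "AE t in lebesgue. t \<in> {0..T} \<longrightarrow> \<bar>fst (lam t)\<bar> + \<bar>snd (lam t) * fst (\<gamma> t)\<bar> = 0"
      by (auto elim: eventually_mono)
    then have "\<gamma> t = \<gamma> 0" if "t \<in> {0..T}" for t
      using extremal_zero_Hamiltonian_imp_constant[OF nonconstant_pos[OF assms]] that by blast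
    with nonconstant_not_constant[OF assms] show False by blast
  qed
  with \<open>lam0 \<ge> 0\<close> have "lam0 > 0" by simp
  then show ?thesis using max by (rule that)
qed

lemma extremal_Hamiltonian_not_AE_zero:
  assumes "nonconstant T \<gamma>" "0 \<le> a" "a < b" "b \<le> T"
    and zero: "AE t in lebesgue. t \<in> {a<..<b} \<longrightarrow>
      fst (u t) * fst (lam t) + snd (u t) * (snd (lam t) * fst (\<gamma> t)) = 0"
  shows False
proof -
  obtain lam0 where "lam0 > 0" and max: "AE t in lebesgue. t \<in> {0..T} \<longrightarrow>
     fst (u t) * fst (lam t) + snd (u t) * (snd (lam t) * fst (\<gamma> t)) = lam0 \<and>
     \<bar>fst (lam t)\<bar> + \<bar>snd (lam t) * fst (\<gamma> t)\<bar> = lam0"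
    by (rule extremal_Hamiltonian_pos[OF assms(1)])
  have "AE t in lebesgue. t \<in> {a<..<b} \<longrightarrow> lam0 = 0"
    using max zero by eventually_elim (use assms(2,4) in force)
  then have "\<exists>t\<in>{a<..<b}. lam0 = 0" by (rule AE_ex_in_open_interval[OF \<open>a < b\<close>])
  with \<open>lam0 > 0\<close> show False by simp
qed

lemma extremal_no_phi1_singular_arc:
  assumes "nonconstant T \<gamma>"
  shows "\<not> singular_arc T lam \<gamma> 1 a b"
proof
  assume "singular_arc T lam \<gamma> 1 a b"
  then have ab: "0 \<le> a" "a < b" "b \<le> T" and zero: "\<forall>t\<in>{a<..<b}. fst (lam t) = 0"
    unfolding singular_arc_def switching_eq by auto
  have sub: "{a<..<b} \<subseteq> {0..T}" using ab by auto
  have "AE t in lebesgue. t \<in> {a<..<b} \<longrightarrow>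
      fst (u t) * fst (lam t) + snd (u t) * (snd (lam t) * fst (\<gamma> t)) = 0"
    using extremal_fst_costate_derivative
  proof (rule eventually_mono, intro impI)
    fix t assume der: "t \<in> {0..T} \<longrightarrow>
        ((\<lambda>s. fst (lam s)) has_real_derivative - (snd (u t) * snd (lam t))) (at t within {0..T})"
      and t: "t \<in> {a<..<b}"
    have "- (snd (u t) * snd (lam t)) = 0"
      by (rule has_real_derivative_zero_if_vanishing_on_open_interval[OF zero sub t
            mp[OF der subsetD[OF sub t]]])
    then show "fst (u t) * fst (lam t) + snd (u t) * (snd (lam t) * fst (\<gamma> t)) = 0"
      using zero t by (simp add: mult.assoc[symmetric])
  qed
  then show False by (rule extremal_Hamiltonian_not_AE_zero[OF assms ab])
qed

lemma extremal_phi2_singular_arc_imp_snd_costate_zero: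
  assumes "nonconstant T \<gamma>" "singular_arc T lam \<gamma> 2 a b" "t \<in> {0..T}"
  shows "snd (lam t) = 0"
proof -
  have ab: "0 \<le> a" "a < b" "b \<le> T" and zero: "\<forall>s\<in>{a<..<b}. snd (lam s) * fst (\<gamma> s) = 0"
    using assms(2) unfolding singular_arc_def switching_eq by auto
  have sub: "{a<..<b} \<subseteq> {0..T}" using ab by auto
  have "snd (lam 0) = 0"
  proof (rule ccontr)
    assume "snd (lam 0) \<noteq> 0"
    have x_zero: "\<forall>s\<in>{a<..<b}. fst (\<gamma> s) = 0"
    proof
      fix s assume s: "s \<in> {a<..<b}"
      have "snd (lam s) = snd (lam 0)"
        by (rule extremal_snd_costate_constant[OF subsetD[OF sub s]])
      then show "fst (\<gamma> s) = 0" using zero[rule_format, OF s] \<open>snd (lam 0) \<noteq> 0\<close> by simp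
    qed
    have "AE t in lebesgue. t \<in> {a<..<b} \<longrightarrow>
        fst (u t) * fst (lam t) + snd (u t) * (snd (lam t) * fst (\<gamma> t)) = 0"
      using admissible_fst_state_derivative[OF extremal_admissible]
    proof (rule eventually_mono, intro impI)
      fix t assume der: "t \<in> {0..T} \<longrightarrow>
          ((\<lambda>s. fst (\<gamma> s)) has_real_derivative fst (u t)) (at t within {0..T})"
        and t: "t \<in> {a<..<b}"
      have "fst (u t) = 0"
        by (rule has_real_derivative_zero_if_vanishing_on_open_interval[OF x_zero sub t
              mp[OF der subsetD[OF sub t]]])
      then show "fst (u t) * fst (lam t) + snd (u t) * (snd (lam t) * fst (\<gamma> t)) = 0"
        using x_zero t by simp
    qed
    then show False by (rule extremal_Hamiltonian_not_AE_zero[OF assms(1) ab])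
  qed
  then show ?thesis using extremal_snd_costate_constant[OF assms(3)] by simp
qed

lemma extremal_snd_costate_zero_imp_saturated:
  assumes snd_zero: "\<forall>t\<in>{0..T}. snd (lam t) = 0"
  shows "saturated_fst_control T u"
proof -
  have "0 \<in> {0..T}" using extremal_admissible by (simp add: admissible_def)
  have fst_const: "fst (lam t) = fst (lam 0)" if "t \<in> {0..T}" for t
    by (rule abs_cont_on_zero_derivative_imp_constant[OF abs_cont_on_fst[OF extremal_costate_abs_cont]
          extremal_fst_costate_derivative _ that])
      (simp add: snd_zero)
  have "fst (lam 0) \<noteq> 0"
    using extremal_costate_nonzero[OF \<open>0 \<in> {0..T}\<close>] snd_zero \<open>0 \<in> {0..T}\<close> by (auto simp: prod_eq_iff)
  obtain lam0 where "lam0 \<ge> 0" and max: "AE t in lebesgue. t \<in> {0..T} \<longrightarrow>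
     fst (u t) * fst (lam t) + snd (u t) * (snd (lam t) * fst (\<gamma> t)) = lam0 \<and>
     \<bar>fst (lam t)\<bar> + \<bar>snd (lam t) * fst (\<gamma> t)\<bar> = lam0"
    by (rule extremal_maximality)
  have sign: "AE t in lebesgue. t \<in> {0..T} \<longrightarrow> fst (u t) * fst (lam 0) = \<bar>fst (lam 0)\<bar>"
    using max
  proof (rule eventually_mono, intro impI)
    fix t assume "t \<in> {0..T} \<longrightarrow>
       fst (u t) * fst (lam t) + snd (u t) * (snd (lam t) * fst (\<gamma> t)) = lam0 \<and>
       \<bar>fst (lam t)\<bar> + \<bar>snd (lam t) * fst (\<gamma> t)\<bar> = lam0" and t: "t \<in> {0..T}"
    then have "fst (u t) * fst (lam t) + snd (u t) * (snd (lam t) * fst (\<gamma> t))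
        = \<bar>fst (lam t)\<bar> + \<bar>snd (lam t) * fst (\<gamma> t)\<bar>" by simp
    then show "fst (u t) * fst (lam 0) = \<bar>fst (lam 0)\<bar>" using fst_const[OF t] snd_zero t by simp
  qed
  have "\<bar>sgn (fst (lam 0))\<bar> = 1" using \<open>fst (lam 0) \<noteq> 0\<close> by simp
  moreover have "AE t in lebesgue. t \<in> {0..T} \<longrightarrow> fst (u t) = sgn (fst (lam 0))"
    using sign
  proof (rule eventually_mono, intro impI)
    fix t assume "t \<in> {0..T} \<longrightarrow> fst (u t) * fst (lam 0) = \<bar>fst (lam 0)\<bar>" "t \<in> {0..T}"
    then have "fst (u t) * fst (lam 0) = sgn (fst (lam 0)) * fst (lam 0)"
      by (simp add: abs_sgn mult.commute)
    then show "fst (u t) = sgn (fst (lam 0))" using \<open>fst (lam 0) \<noteq> 0\<close> by simp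
  qed
  ultimately show ?thesis by (rule saturated_fst_controlI)
qed

lemma extremal_singular_arcD:
  assumes "nonconstant T \<gamma>" "j \<in> {1, 2}" "singular_arc T lam \<gamma> j a b"
  shows "j = 2" "\<forall>t\<in>{0..T}. snd (lam t) = 0"
proof -
  show "j = 2" using assms extremal_no_phi1_singular_arc by auto
  then show "\<forall>t\<in>{0..T}. snd (lam t) = 0"
    using assms extremal_phi2_singular_arc_imp_snd_costate_zero by blast
qed

end

lemma extremal_pair_saturated_lift:
  assumes adm: "admissible T \<gamma> u" and s: "\<bar>s\<bar> = 1"
    and bang: "AE t in lebesgue. t \<in> {0..T} \<longrightarrow> fst (u t) = s"
  shows "extremal_pair T (\<lambda>_. (s, 0)) \<gamma> u"
  unfolding extremal_pair_def
proof (intro conjI)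
  show "admissible T \<gamma> u" by (rule adm)
  show "abs_cont_on {0..T} (\<lambda>_. (s, 0))" by (rule abs_cont_on_const)
  show "\<forall>t\<in>{0..T}. (s, 0) \<noteq> (0::real \<times> real)" using s by (auto simp: zero_prod_def)
  have "((\<lambda>p. Ham (s, 0) p (u t)) has_derivative (\<lambda>h. - (0 \<bullet> h))) (at (\<gamma> t))" for t
    unfolding Ham_eq by simp
  then show "AE t in lebesgue. t \<in> {0..T} \<longrightarrow>
      (\<exists>w. ((\<lambda>_. (s, 0)) has_vector_derivative w) (at t within {0..T}) \<and>
           ((\<lambda>p. Ham (s, 0) p (u t)) has_derivative (\<lambda>h. - (w \<bullet> h))) (at (\<gamma> t)))"
    using has_vector_derivative_const by (intro always_eventually) blast
  have Ham_deriv: "((\<lambda>l. Ham l (\<gamma> t) (u t)) has_derivative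
      (\<lambda>h. (fst (u t), snd (u t) * fst (\<gamma> t)) \<bullet> h)) (at l)" for t l
    unfolding Ham_eq
    by (rule has_derivative_eq_rhs, (rule derivative_intros)+) (auto simp: inner_prod_def algebra_simps)
  show "AE t in lebesgue. t \<in> {0..T} \<longrightarrow>
      (\<exists>v. (\<gamma> has_vector_derivative v) (at t within {0..T}) \<and>
           ((\<lambda>l. Ham l (\<gamma> t) (u t)) has_derivative (\<lambda>h. v \<bullet> h)) (at (s, 0)))"
    using admissible_state_derivative[OF adm]
  proof (rule eventually_mono, intro impI)
    fix t assume "t \<in> {0..T} \<longrightarrow>
        (\<gamma> has_vector_derivative (fst (u t), snd (u t) * fst (\<gamma> t))) (at t within {0..T})"
      and "t \<in> {0..T}"
    then show "\<exists>v. (\<gamma> has_vector_derivative v) (at t within {0..T}) \<and>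
           ((\<lambda>l. Ham l (\<gamma> t) (u t)) has_derivative (\<lambda>h. v \<bullet> h)) (at (s, 0))"
      using Ham_deriv by blast
  qed
  have "s * s = 1" using s abs_mult_self_eq[of s] by simp
  have "AE t in lebesgue. t \<in> {0..T} \<longrightarrow>
      Ham (s, 0) (\<gamma> t) (u t) = \<bar>(s, 0) \<bullet> X 1 (\<gamma> t)\<bar> + \<bar>(s, 0) \<bullet> X 2 (\<gamma> t)\<bar> \<and>
      \<bar>(s, 0) \<bullet> X 1 (\<gamma> t)\<bar> + \<bar>(s, 0) \<bullet> X 2 (\<gamma> t)\<bar> = 1"
    unfolding Ham_eq inner_X1 inner_X2
    using bang by (rule eventually_mono) (simp add: \<open>s * s = 1\<close> s)
  then show "\<exists>lam0\<ge>0. AE t in lebesgue. t \<in> {0..T} \<longrightarrow>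
      Ham (s, 0) (\<gamma> t) (u t) = \<bar>(s, 0) \<bullet> X 1 (\<gamma> t)\<bar> + \<bar>(s, 0) \<bullet> X 2 (\<gamma> t)\<bar> \<and>
      \<bar>(s, 0) \<bullet> X 1 (\<gamma> t)\<bar> + \<bar>(s, 0) \<bullet> X 2 (\<gamma> t)\<bar> = lam0"
    by (intro exI[of _ 1]) simp
qed

lemma extremal_with_singular_arc_iff_saturated:
  assumes "nonconstant T \<gamma>"
  shows "extremal_with_singular_arc T \<gamma> \<longleftrightarrow> (\<exists>u. admissible T \<gamma> u \<and> saturated_fst_control T u)"
proof
  assume "extremal_with_singular_arc T \<gamma>"
  then obtain u lam j a b where j: "j \<in> {1, 2}" and E: "extremal_pair T lam \<gamma> u"
    and S: "singular_arc T lam \<gamma> j a b"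
    unfolding extremal_with_singular_arc_def by blast
  have "\<forall>t\<in>{0..T}. snd (lam t) = 0" by (rule extremal_singular_arcD(2)[OF E assms j S])
  then have "saturated_fst_control T u" by (rule extremal_snd_costate_zero_imp_saturated[OF E])
  with extremal_admissible[OF E] show "\<exists>u. admissible T \<gamma> u \<and> saturated_fst_control T u" by blast
next
  assume "\<exists>u. admissible T \<gamma> u \<and> saturated_fst_control T u"
  then obtain u s where "admissible T \<gamma> u" "\<bar>s\<bar> = 1"
    and "AE t in lebesgue. t \<in> {0..T} \<longrightarrow> fst (u t) = s"
    by (auto elim: saturated_fst_controlE)
  then have "extremal_pair T (\<lambda>_. (s, 0)) \<gamma> u" by (intro extremal_pair_saturated_lift)
  moreover have "singular_arc T (\<lambda>_. (s, 0)) \<gamma> 2 0 T"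
    using nonconstant_pos[OF assms] by (simp add: singular_arc_def switching_eq)
  ultimately show "extremal_with_singular_arc T \<gamma>"
    unfolding extremal_with_singular_arc_def by blast
qed

section \<open>Time-optimality\<close>

lemma admissible_fst_control_bound:
  "admissible T \<gamma> u \<Longrightarrow> AE t in lebesgue. t \<in> {0..T} \<longrightarrow> - 1 \<le> fst (u t) \<and> fst (u t) \<le> 1"
  unfolding admissible_def by (auto elim!: eventually_mono)

lemma admissible_fst_displacement_le:
  assumes "admissible T \<gamma> u"
  shows "\<bar>fst (\<gamma> T) - fst (\<gamma> 0)\<bar> \<le> T"
proof -
  have "0 \<le> T" and ac: "abs_cont_on {0..T} (\<lambda>t. fst (\<gamma> t))"
    using assms abs_cont_on_fst by (auto simp: admissible_def)
  note der = admissible_fst_state_derivative[OF assms]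
  note bound = admissible_fst_control_bound[OF assms]
  have "fst (\<gamma> T) - fst (\<gamma> 0) \<le> 1 * (T - 0)"
    by (rule abs_cont_on_increment_le[OF ac der _ order.refl \<open>0 \<le> T\<close> order.refl])
      (use bound in \<open>rule eventually_mono, blast\<close>)
  moreover have "- 1 * (T - 0) \<le> fst (\<gamma> T) - fst (\<gamma> 0)"
    by (rule abs_cont_on_increment_ge[OF ac der _ order.refl \<open>0 \<le> T\<close> order.refl])
      (use bound in \<open>rule eventually_mono, blast\<close>)
  ultimately show ?thesis by simp
qed

lemma time_minimizer_if_saturated:
  assumes adm: "admissible T \<gamma> u" and "saturated_fst_control T u"
  shows "time_minimizer T \<gamma>"
  unfolding time_minimizer_def
proof (intro allI impI)
  obtain s where s: "\<bar>s\<bar> = 1" and bang: "AE t in lebesgue. t \<in> {0..T} \<longrightarrow> fst (u t) = s"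
    using \<open>saturated_fst_control T u\<close> by (rule saturated_fst_controlE)
  fix T' \<gamma>' u' assume H: "admissible T' \<gamma>' u' \<and> \<gamma>' 0 = \<gamma> 0 \<and> \<gamma>' T' = \<gamma> T"
  have "0 \<le> T" and ac: "abs_cont_on {0..T} (\<lambda>t. s * fst (\<gamma> t))"
    using adm abs_cont_on_bounded_linear[OF abs_cont_on_fst bounded_linear_mult_right]
    by (auto simp: admissible_def)
  have der: "AE t in lebesgue. t \<in> {0..T} \<longrightarrow>
      ((\<lambda>t. s * fst (\<gamma> t)) has_real_derivative s * fst (u t)) (at t within {0..T})"
    using admissible_fst_state_derivative[OF adm] by (rule eventually_mono) (use DERIV_cmult in blast)
  have "s * s = 1" using s abs_mult_self_eq[of s] by simp
  then have bound: "AE t in lebesgue. t \<in> {0..T} \<longrightarrow> 1 \<le> s * fst (u t)"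
    using bang by (auto elim: eventually_mono)
  have "1 * (T - 0) \<le> s * fst (\<gamma> T) - s * fst (\<gamma> 0)"
    by (rule abs_cont_on_increment_ge[OF ac der bound order.refl \<open>0 \<le> T\<close> order.refl])
  also have "\<dots> \<le> \<bar>fst (\<gamma>' T') - fst (\<gamma>' 0)\<bar>"
    using H s abs_ge_self[of "s * (fst (\<gamma> T) - fst (\<gamma> 0))"]
    by (simp add: right_diff_distrib[symmetric] abs_mult)
  also have "\<dots> \<le> T'"
    using H by (blast intro: admissible_fst_displacement_le)
  finally show "T \<le> T'" by simp
qed

theorem mainTheorem9:
  fixes T :: real and \<gamma> :: "real \<Rightarrow> real \<times> real"
  assumes "nonconstant T \<gamma>"
  shows "(extremal_with_singular_arc T \<gamma> \<longleftrightarrow>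
            (\<exists>u. admissible T \<gamma> u \<and>
                 ((AE t in lebesgue. t \<in> {0..T} \<longrightarrow> fst (u t) = 1) \<or>
                  (AE t in lebesgue. t \<in> {0..T} \<longrightarrow> fst (u t) = -1))))
       \<and> (\<forall>u lam j a b. j \<in> {1, 2} \<and> extremal_pair T lam \<gamma> u \<and> singular_arc T lam \<gamma> j a b
            \<longrightarrow> (\<forall>t\<in>{0..T}. switching lam \<gamma> j t = 0))
       \<and> (extremal_with_singular_arc T \<gamma> \<longrightarrow> time_minimizer T \<gamma>)"
  unfolding saturated_fst_control_def[symmetric]
proof (intro conjI allI impI ballI)
  show iff: "extremal_with_singular_arc T \<gamma> \<longleftrightarrow> (\<exists>u. admissible T \<gamma> u \<and> saturated_fst_control T u)"
    by (rule extremal_with_singular_arc_iff_saturated[OF assms])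
  show "switching lam \<gamma> j t = 0"
    if "j \<in> {1, 2} \<and> extremal_pair T lam \<gamma> u \<and> singular_arc T lam \<gamma> j a b" "t \<in> {0..T}"
    for u lam j a b t
    using extremal_singular_arcD[of T lam \<gamma> u j a b] assms that by (simp add: switching_eq)
  show "time_minimizer T \<gamma>" if "extremal_with_singular_arc T \<gamma>"
    using that iff time_minimizer_if_saturated by blast
qed

end
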